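(* The numbers $P_{1^{-1}6^{1}10^{1}15^{-1}}(n)$, defined by $\sum_{n\ge0}P_{1^{-1}6^{1}10^{1}15^{-1}}(n)q^n=\frac{f_6f_{10}}{f_1f_{15}}$, form a $2$-convolutive sequence.
   Context: $f_i:=(q^i;q^i)_\infty=\prod_{k\ge1}(1-q^{ik})$. A sequence $(a_n)_{n\ge0}$ is $m$-convolutive if $\sum_{n\ge0}a_{mn}q^n=\big(\sum_{n\ge0}a_nq^n\big)^m$. *)

theory Defs
  imports "HOL-Computational_Algebra.Formal_Power_Series"
begin

text \<open>f_i = (q^i;q^i)_\<infinity> = prod_{k>=1} (1 - q^{ik}) as a formal power series:
  its n-th coefficient is the n-th coefficient of the finite product over k = 1..n
  (factors with k > n do not affect coefficients of degree \<le> n when i \<ge> 1).\<close>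
definition euler_f :: "nat \<Rightarrow> rat fps" where
  "euler_f i = Abs_fps (\<lambda>n. fps_nth (\<Prod>k\<in>{1..n}. (1 - fps_X ^ (i * k))) n)"

definition P_gf :: "rat fps" where
  "P_gf = euler_f 6 * euler_f 10 * inverse (euler_f 1 * euler_f 15)"

definition P :: "nat \<Rightarrow> rat" where
  "P n = fps_nth P_gf n"

definition convolutive :: "nat \<Rightarrow> (nat \<Rightarrow> 'a::comm_ring_1) \<Rightarrow> bool" where
  "convolutive m a \<longleftrightarrow> Abs_fps (\<lambda>n. a (m * n)) = (Abs_fps a) ^ m"

end

theory Submission
  imports Defs
begin

text \<open>
  Write \<psi>(q) = \<Sum>n\<ge>0. q^(n(n+1)/2) = \<Sum>j\<in>\<int>. q^T(j) with T(j) = j(2j+1). Gauss's identity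
  \<psi>(q) = f_2^2 / f_1 gives

    f_6 f_10 / (f_1 f_15) = \<psi>(q) \<psi>(q^15) Q(q^2),   Q = f_3 f_5 / (f_1^2 f_15^2).

  Extracting the even-indexed coefficients commutes with multiplication by Q(q^2), and the even
  part of \<psi>(q) \<psi>(q^15) is \<psi>(q^3) \<psi>(q^5): the representations 2n = T(k) + 15 T(l) correspond
  bijectively to the representations n = 3 T(a) + 5 T(b), because
  (5v - 3u)^2 + 15 (u + v)^2 = 8 (3u^2 + 5v^2). Hence the even part is
  \<psi>(q^3) \<psi>(q^5) Q(q) = (f_6 f_10 / (f_1 f_15))^2.

  Gauss's identity is the limit of finite identities: the centred q-binomial theorem gives
  (-q;q^2)_2n = \<Sum>j. q^T(j) [2n, n-j]_(q^4), whose truncations tend to \<psi>(q) / f_4, while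
  (-q;q^2)_2n (q^4;q^4)_2n (q;q)_4n = (q^2;q^2)_4n (q^2;q^2)_2n is a rearrangement of factors.
\<close>

unbundle fps_syntax

lemma fps_eq_by_cutoff:
  assumes "\<And>n. fps_cutoff n f = fps_cutoff n g"
  shows "f = g"
  using assms by (metis fps_cutoff_eq_fps_cutoff_iff fps_ext lessI)

lemma fps_cutoff_mult:
  fixes f g :: "'a::comm_ring_1 fps"
  shows "fps_cutoff n (f * g) = fps_cutoff n (fps_cutoff n f * fps_cutoff n g)"
  unfolding fps_cutoff_eq_fps_cutoff_iff
  by (simp add: fps_cutoff_left_mult_nth fps_cutoff_right_mult_nth)

lemma fps_cutoff_mult_cong:
  fixes f g h k :: "'a::comm_ring_1 fps"
  assumes "fps_cutoff n f = fps_cutoff n g" "fps_cutoff n h = fps_cutoff n k"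
  shows "fps_cutoff n (f * h) = fps_cutoff n (g * k)"
  using assms by (metis fps_cutoff_mult)

lemma fps_cutoff_sum:
  "fps_cutoff n (\<Sum>x\<in>S. f x) = (\<Sum>x\<in>S. fps_cutoff n (f x))"
  by (rule fps_ext) (simp add: fps_sum_nth)

lemma fps_cutoff_X_power_mult:
  "n \<le> k \<Longrightarrow> fps_cutoff n (fps_X ^ k * f :: 'a::comm_ring_1 fps) = 0"
  by (rule fps_ext) (simp add: fps_X_power_mult_nth)

lemma fps_cutoff_compose_cong:
  assumes "fps_cutoff n f = fps_cutoff n g"
  shows "fps_cutoff n (f oo h) = fps_cutoff n (g oo h)"
  using assms unfolding fps_cutoff_eq_fps_cutoff_iff by (simp add: fps_compose_nth)

section \<open>\<open>q\<close>-Pochhammer symbols and Gaussian binomial coefficients\<close>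

lemma Suc_choose_two: "Suc m choose 2 = (m choose 2) + m"
  by (simp add: numeral_2_eq_2)

lemma double_choose_two: "2 * (m choose 2) + m = m * m"
  by (induction m) (simp_all add: Suc_choose_two)

lemma sum_lessThan_choose_two: "(\<Sum>i<n. i) = n choose 2"
  by (induction n) (simp_all add: Suc_choose_two binomial_eq_0)

lemma prod_lessThan_add:
  fixes f :: "nat \<Rightarrow> 'a::comm_monoid_mult"
  shows "(\<Prod>i<m+k. f i) = (\<Prod>i<m. f i) * (\<Prod>i<k. f (m+i))"
  by (induction k) (simp_all add: mult_ac)

lemma prod_lessThan_double:
  fixes f :: "nat \<Rightarrow> 'a::comm_monoid_mult"
  shows "(\<Prod>i<2*m. f i) = (\<Prod>i<m. f (2*i)) * (\<Prod>i<m. f (2*i+1))"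
  by (induction m) (simp_all add: mult_ac)

definition qpoch :: "'a::comm_ring_1 \<Rightarrow> nat \<Rightarrow> 'a" where
  "qpoch p m = (\<Prod>i<m. 1 - p ^ Suc i)"

lemma qpoch_0 [simp]: "qpoch p 0 = 1"
  by (simp add: qpoch_def)

lemma qpoch_Suc: "qpoch p (Suc m) = qpoch p m * (1 - p ^ Suc m)"
  by (simp add: qpoch_def)

lemma qpoch_double: "qpoch p (2*m) = (\<Prod>i<m. 1 - p ^ (2*i+1)) * qpoch (p^2) m"
proof -
  have "p ^ Suc (2*i+1) = (p^2) ^ Suc i" for i
    by (simp only: power_mult[symmetric]) simp
  then show ?thesis
    unfolding qpoch_def prod_lessThan_double by simp
qed

lemma qpoch_compose:
  fixes p c :: "'a::idom fps"
  assumes "c $ 0 = 0"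
  shows "qpoch p m oo c = qpoch (p oo c) m"
  by (induction m)
    (simp_all add: qpoch_Suc assms fps_compose_mult_distrib fps_compose_sub_distrib fps_compose_power)

fun qbinom :: "'a::comm_ring_1 \<Rightarrow> nat \<Rightarrow> nat \<Rightarrow> 'a" where
  "qbinom p 0 m = (if m = 0 then 1 else 0)"
| "qbinom p (Suc N) m = qbinom p N m + (if m = 0 then 0 else p ^ (Suc N - m) * qbinom p N (m - 1))"

lemma qbinom_eq_0: "N < m \<Longrightarrow> qbinom p N m = 0"
  by (induction N arbitrary: m) auto

lemma qbinom_0_right [simp]: "qbinom p N 0 = 1"
  by (induction N) auto

lemma prod_qbinomial:
  "(\<Prod>i<N. x + p ^ i * y) = (\<Sum>m\<le>N. p ^ (m choose 2) * qbinom p N m * y ^ m * x ^ (N - m))"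
proof (induction N)
  case (Suc N)
  let ?c = "\<lambda>m. p ^ (m choose 2) * qbinom p N m * y ^ m"
  have times_x: "(\<Sum>m\<le>N. ?c m * x ^ (N - m)) * x = (\<Sum>m\<le>Suc N. ?c m * x ^ (Suc N - m))"
    by (auto simp: qbinom_eq_0 sum_distrib_right Suc_diff_le mult.assoc intro!: sum.cong)
  have exponent: "p ^ (m choose 2) * p ^ N = p ^ (Suc m choose 2) * p ^ (Suc N - Suc m)" if "m \<le> N" for m
    using that by (simp add: Suc_choose_two flip: power_add)
  have "(\<Sum>m\<le>N. ?c m * x ^ (N - m)) * (p ^ N * y)
      = (\<Sum>m\<le>N. p ^ (Suc m choose 2) * p ^ (Suc N - Suc m) * qbinom p N m * y ^ Suc m * x ^ (Suc N - Suc m))"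
    unfolding sum_distrib_right
  proof (rule sum.cong)
    fix m assume "m \<in> {..N}"
    have "?c m * x ^ (N - m) * (p ^ N * y)
        = (p ^ (m choose 2) * p ^ N) * qbinom p N m * y ^ Suc m * x ^ (Suc N - Suc m)"
      by (simp add: mult_ac)
    also have "\<dots> = p ^ (Suc m choose 2) * p ^ (Suc N - Suc m) * qbinom p N m * y ^ Suc m * x ^ (Suc N - Suc m)"
      using exponent \<open>m \<in> {..N}\<close> by (simp only: atMost_iff)
    finally show "?c m * x ^ (N - m) * (p ^ N * y)
        = p ^ (Suc m choose 2) * p ^ (Suc N - Suc m) * qbinom p N m * y ^ Suc m * x ^ (Suc N - Suc m)" .
  qed simp
  then have times_y: "(\<Sum>m\<le>N. ?c m * x ^ (N - m)) * (p ^ N * y)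
      = (\<Sum>m\<le>Suc N. p ^ (m choose 2) * (if m = 0 then 0 else p ^ (Suc N - m) * qbinom p N (m - 1))
                       * y ^ m * x ^ (Suc N - m))"
    by (subst sum.atMost_Suc_shift) (simp add: mult.assoc)
  have "(\<Prod>i<Suc N. x + p ^ i * y) = (\<Sum>m\<le>N. ?c m * x ^ (N - m)) * x + (\<Sum>m\<le>N. ?c m * x ^ (N - m)) * (p ^ N * y)"
    unfolding prod.lessThan_Suc Suc.IH by (simp only: distrib_left)
  also have "\<dots> = (\<Sum>m\<le>Suc N. p ^ (m choose 2) * qbinom p (Suc N) m * y ^ m * x ^ (Suc N - m))"
    unfolding times_x times_y by (simp add: sum.distrib[symmetric] ring_distribs)
  finally show ?case .
qed (simp add: binomial_eq_0)

lemma qbinom_qpoch: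
  "m \<le> N \<Longrightarrow> qbinom p N m * qpoch p m * qpoch p (N - m) = qpoch p N"
proof (induction N arbitrary: m)
  case (Suc N)
  show ?case
  proof (cases m)
    case (Suc k)
    show ?thesis
    proof (cases "k = N")
      case True
      then have "qbinom p (Suc N) m * qpoch p m * qpoch p (Suc N - m)
          = (qbinom p N N * qpoch p N * qpoch p (N - N)) * (1 - p ^ Suc N)"
        using \<open>m = Suc k\<close> by (simp add: qbinom_eq_0 qpoch_Suc mult_ac)
      then show ?thesis
        using Suc.IH[of N] by (simp add: qpoch_Suc)
    next
      case False
      with Suc.prems \<open>m = Suc k\<close> have "k < N" by simp
      then have N_minus: "Suc N - m = Suc (N - Suc k)" "N - k = Suc (N - Suc k)"
        using \<open>m = Suc k\<close> by simp_all
      have "qbinom p (Suc N) m * qpoch p m * qpoch p (Suc N - m)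
          = (qbinom p N (Suc k) * qpoch p (Suc k) * qpoch p (N - Suc k)) * (1 - p ^ (N - k))
            + p ^ (N - k) * (qbinom p N k * qpoch p k * qpoch p (N - k)) * (1 - p ^ Suc k)"
        using \<open>m = Suc k\<close> by (simp add: N_minus qpoch_Suc algebra_simps)
      also have "\<dots> = qpoch p N * ((1 - p ^ (N - k)) + p ^ (N - k) * (1 - p ^ Suc k))"
        using Suc.IH[of k] Suc.IH[of "Suc k"] \<open>k < N\<close> by (simp add: algebra_simps)
      also have "\<dots> = qpoch p N * (1 - p ^ (N - k) * p ^ Suc k)"
        by (simp add: algebra_simps)
      also have "p ^ (N - k) * p ^ Suc k = p ^ Suc N"
      proof -
        have "N - k + Suc k = Suc N"
          using \<open>k < N\<close> by simp
        then show ?thesis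
          by (metis power_add)
      qed
      finally show ?thesis
        by (simp add: qpoch_Suc)
    qed
  qed simp
qed simp

lemma qpoch_X_power_cutoff:
  assumes "N \<le> N'" "n \<le> a * Suc N"
  shows "fps_cutoff n (qpoch (fps_X ^ a) N' :: 'a::comm_ring_1 fps) = fps_cutoff n (qpoch (fps_X ^ a) N)"
  using assms(1)
proof (induction N' rule: dec_induct)
  case (step m)
  have "n \<le> a * Suc m"
    using assms(2) step(1) by (meson Suc_le_mono le_trans mult_le_mono2)
  then have "fps_cutoff n (1 - fps_X ^ (a * Suc m) :: 'a fps) = fps_cutoff n 1"
    unfolding fps_cutoff_eq_fps_cutoff_iff by simp
  then have "fps_cutoff n (1 - (fps_X ^ a) ^ Suc m :: 'a fps) = fps_cutoff n 1"
    by (simp only: power_mult)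
  then show ?case
    using fps_cutoff_mult_cong[OF step.IH] by (simp add: qpoch_Suc)
qed simp

lemma euler_f_nth_0: "euler_f a $ 0 = 1"
  by (simp add: euler_f_def)

lemma euler_f_unit: "euler_f a * inverse (euler_f a) = 1"
  by (rule inverse_mult_eq_1') (simp add: euler_f_nth_0)

lemma euler_f_cutoff:
  assumes "1 \<le> a" "n \<le> N"
  shows "fps_cutoff n (euler_f a) = fps_cutoff n (qpoch (fps_X ^ a) N)"
  unfolding fps_cutoff_eq_fps_cutoff_iff
proof (intro allI impI)
  fix i assume "i < n"
  have "euler_f a $ i = qpoch (fps_X ^ a) i $ i"
    by (simp add: euler_f_def qpoch_def prod.atLeast1_atMost_eq power_mult)
  also have "\<dots> = qpoch (fps_X ^ a) N $ i"
  proof -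
    have "Suc i \<le> a * Suc i"
      using mult_le_mono1[OF assms(1), of "Suc i"] by simp
    moreover have "i \<le> N"
      using \<open>i < n\<close> assms(2) by simp
    ultimately show ?thesis
      using qpoch_X_power_cutoff[of i N "Suc i" a]
      unfolding fps_cutoff_eq_fps_cutoff_iff by (metis lessI)
  qed
  finally show "euler_f a $ i = qpoch (fps_X ^ a) N $ i" .
qed

section \<open>Gauss's identity for \<open>\<psi>\<close>\<close>

definition odd_prod :: "'a::comm_ring_1 \<Rightarrow> nat \<Rightarrow> 'a" where
  "odd_prod x N = (\<Prod>j<N. 1 + x ^ (2*j+1))"

lemma odd_prod_qpoch:
  "odd_prod x (2*n) * qpoch (x^4) (2*n) * qpoch x (4*n) = qpoch (x^2) (4*n) * qpoch (x^2) (2*n)"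
proof -
  have split_1: "qpoch x (4*n) = (\<Prod>i<2*n. 1 - x ^ (2*i+1)) * qpoch (x^2) (2*n)"
    using qpoch_double[of x "2*n"] by simp
  have split_2: "qpoch (x^2) (4*n) = (\<Prod>i<2*n. 1 - (x^2) ^ (2*i+1)) * qpoch (x^4) (2*n)"
    using qpoch_double[of "x^2" "2*n"] by (simp flip: power_mult)
  have pairs: "odd_prod x (2*n) * (\<Prod>i<2*n. 1 - x ^ (2*i+1)) = (\<Prod>i<2*n. 1 - (x^2) ^ (2*i+1))"
    unfolding odd_prod_def prod.distrib[symmetric]
    by (rule prod.cong) (simp_all add: algebra_simps power2_eq_square flip: power_mult power_mult_distrib)
  show ?thesis
    unfolding split_1 split_2 pairs[symmetric] by (simp only: mult_ac)
qed

(* As j ranges over the integers, j(2j+1) runs through every triangular number exactly once. *)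
definition trinum :: "int \<Rightarrow> nat" where
  "trinum j = nat (j * (2*j + 1))"

lemma of_nat_trinum: "int (trinum j) = j * (2*j + 1)"
  unfolding trinum_def by (simp add: zero_le_mult_iff) arith

lemma abs_le_trinum: "\<bar>j\<bar> \<le> int (trinum j)"
proof -
  have "\<bar>j\<bar> * 1 \<le> \<bar>j\<bar> * \<bar>2*j + 1\<bar>"
    by (rule mult_left_mono) arith+
  also have "\<dots> = int (trinum j)"
    by (metis abs_mult abs_of_nonneg of_nat_0_le_iff of_nat_trinum)
  finally show ?thesis by simp
qed

lemma finite_trinum_le: "finite {j. trinum j \<le> n}"
proof (rule finite_subset)
  show "{j. trinum j \<le> n} \<subseteq> {-int n..int n}"
  proof
    fix j assume "j \<in> {j. trinum j \<le> n}"
    then have "\<bar>j\<bar> \<le> int n"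
      using abs_le_trinum[of j] by simp
    then show "j \<in> {-int n..int n}" by auto
  qed
qed simp

lemma centered_exponent:
  assumes "m \<le> 2*n"
  shows "4 * (m choose 2) + (4*n - 1) * (2*n - m) = 3*n*(2*n - 1) + trinum (int n - int m)"
proof (cases "n = 0")
  case False
  have choose: "2 * int (m choose 2) = int m * int m - int m"
    using arg_cong[OF double_choose_two[of m], of int] by simp
  have diffs: "int (4*n - 1) = 4 * int n - 1" "int (2*n - m) = 2 * int n - int m" "int (2*n - 1) = 2 * int n - 1"
    using False assms by auto
  have "int (4 * (m choose 2) + (4*n - 1) * (2*n - m)) = 4 * int (m choose 2) + (4 * int n - 1) * (2 * int n - int m)"
    by (simp only: of_nat_add of_nat_mult diffs of_nat_numeral)
  also have "\<dots> = int (3*n*(2*n - 1) + trinum (int n - int m))"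
    unfolding of_nat_add of_nat_mult diffs of_nat_numeral of_nat_trinum using choose by algebra
  finally show ?thesis
    by (simp only: of_nat_eq_iff)
qed (use assms in \<open>simp add: binomial_eq_0 trinum_def\<close>)

lemma odd_prod_double:
  "odd_prod x (2*n) = (\<Prod>i<n. 1 + x ^ (4*i+1)) * (\<Prod>i<n. 1 + x ^ (4*i+3))"
proof -
  have exponents: "2*(2*i)+1 = 4*i+1" "2*(2*i+1)+1 = 4*i+3" for i :: nat
    by simp_all
  show ?thesis
    unfolding odd_prod_def prod_lessThan_double by (simp only: exponents)
qed

lemma prod_shifted_lower_half:
  fixes x :: "'a::comm_semiring_1"
  shows "(\<Prod>i<n. x ^ (4*n - 1) + (x^4) ^ i) = x ^ (4 * (n choose 2)) * (\<Prod>i<n. 1 + x ^ (4*i+3))"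
proof -
  have "(\<Prod>i<n. x ^ (4*n - 1) + (x^4) ^ i) = (\<Prod>i<n. x ^ (4*i) * (1 + x ^ (4*(n - Suc i)+3)))"
  proof (rule prod.cong)
    fix i assume "i \<in> {..<n}"
    then have "4*i + (4*(n - Suc i)+3) = 4*n - 1" by auto
    then have "x ^ (4*n - 1) = x ^ (4*i) * x ^ (4*(n - Suc i)+3)"
      by (metis power_add)
    then show "x ^ (4*n - 1) + (x^4) ^ i = x ^ (4*i) * (1 + x ^ (4*(n - Suc i)+3))"
      by (simp add: distrib_left power_mult add.commute)
  qed simp
  also have "\<dots> = x ^ (4 * (n choose 2)) * (\<Prod>i<n. 1 + x ^ (4*i+3))"
    using prod.nat_diff_reindex[of "\<lambda>i. 1 + x ^ (4*i+3)" n]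
    by (simp add: prod.distrib power_sum sum_distrib_left flip: sum_lessThan_choose_two)
  finally show ?thesis .
qed

lemma prod_shifted_upper_half:
  fixes x :: "'a::comm_semiring_1"
  shows "(\<Prod>i<n. x ^ (4*n - 1) + (x^4) ^ (n+i)) = x ^ (n * (4*n - 1)) * (\<Prod>i<n. 1 + x ^ (4*i+1))"
proof -
  have "(\<Prod>i<n. x ^ (4*n - 1) + (x^4) ^ (n+i)) = (\<Prod>i<n. x ^ (4*n - 1) * (1 + x ^ (4*i+1)))"
  proof (rule prod.cong)
    fix i assume "i \<in> {..<n}"
    then have "4*n - 1 + (4*i+1) = 4*(n+i)" by auto
    then have "x ^ (4*n - 1) * x ^ (4*i+1) = (x^4) ^ (n+i)"
      by (simp only: power_add[symmetric] power_mult[symmetric])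
    then show "x ^ (4*n - 1) + (x^4) ^ (n+i) = x ^ (4*n - 1) * (1 + x ^ (4*i+1))"
      by (simp only: distrib_left mult_1_right)
  qed simp
  also have "\<dots> = x ^ (n * (4*n - 1)) * (\<Prod>i<n. 1 + x ^ (4*i+1))"
    by (simp add: prod.distrib mult.commute flip: power_mult)
  finally show ?thesis .
qed

(* Substituting x := x^(4n-1), y := 1, p := x^4 in the q-binomial theorem centres the
   expansion at m = n, where the exponents become j(2j+1) with j = n - m. *)
lemma prod_shifted_odd_prod:
  "(\<Prod>i<2*n. x ^ (4*n - 1) + (x^4) ^ i) = x ^ (3*n*(2*n - 1)) * odd_prod x (2*n)"
proof -
  have "(\<Prod>i<2*n. x ^ (4*n - 1) + (x^4) ^ i)
      = (\<Prod>i<n. x ^ (4*n - 1) + (x^4) ^ i) * (\<Prod>i<n. x ^ (4*n - 1) + (x^4) ^ (n+i))"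
    by (simp only: mult_2 prod_lessThan_add)
  also have "\<dots> = x ^ (4 * (n choose 2) + n * (4*n - 1)) * odd_prod x (2*n)"
    unfolding prod_shifted_lower_half prod_shifted_upper_half odd_prod_double
    by (simp only: power_add mult_ac)
  also have "4 * (n choose 2) + n * (4*n - 1) = 3*n*(2*n - 1)"
    using centered_exponent[of n n] by (simp add: trinum_def mult.commute)
  finally show ?thesis .
qed

lemma odd_prod_expansion:
  fixes x :: "'a::idom"
  assumes "x \<noteq> 0"
  shows "odd_prod x (2*n) = (\<Sum>m\<le>2*n. x ^ trinum (int n - int m) * qbinom (x^4) (2*n) m)"
proof -
  have "x ^ (3*n*(2*n - 1)) * odd_prod x (2*n) = (\<Prod>i<2*n. x ^ (4*n - 1) + (x^4) ^ i * 1)"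
    using prod_shifted_odd_prod[of x n] by simp
  also have "\<dots> = (\<Sum>m\<le>2*n. (x^4) ^ (m choose 2) * qbinom (x^4) (2*n) m * 1 ^ m * (x ^ (4*n - 1)) ^ (2*n - m))"
    by (rule prod_qbinomial)
  also have "\<dots> = (\<Sum>m\<le>2*n. x ^ (3*n*(2*n - 1)) * (x ^ trinum (int n - int m) * qbinom (x^4) (2*n) m))"
  proof (rule sum.cong)
    fix m assume "m \<in> {..2*n}"
    have "(x^4) ^ (m choose 2) * qbinom (x^4) (2*n) m * 1 ^ m * (x ^ (4*n - 1)) ^ (2*n - m)
        = ((x^4) ^ (m choose 2) * (x ^ (4*n - 1)) ^ (2*n - m)) * qbinom (x^4) (2*n) m"
      by (simp add: mult_ac)
    also have "(x^4) ^ (m choose 2) * (x ^ (4*n - 1)) ^ (2*n - m) = x ^ (4 * (m choose 2) + (4*n - 1) * (2*n - m))"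
      by (simp only: power_add power_mult)
    also have "4 * (m choose 2) + (4*n - 1) * (2*n - m) = 3*n*(2*n - 1) + trinum (int n - int m)"
      using centered_exponent \<open>m \<in> {..2*n}\<close> by simp
    also have "x ^ (3*n*(2*n - 1) + trinum (int n - int m)) * qbinom (x^4) (2*n) m
        = x ^ (3*n*(2*n - 1)) * (x ^ trinum (int n - int m) * qbinom (x^4) (2*n) m)"
      by (simp add: power_add mult.assoc)
    finally show "(x^4) ^ (m choose 2) * qbinom (x^4) (2*n) m * 1 ^ m * (x ^ (4*n - 1)) ^ (2*n - m)
        = x ^ (3*n*(2*n - 1)) * (x ^ trinum (int n - int m) * qbinom (x^4) (2*n) m)" .
  qed simp
  also have "\<dots> = x ^ (3*n*(2*n - 1)) * (\<Sum>m\<le>2*n. x ^ trinum (int n - int m) * qbinom (x^4) (2*n) m)"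
    by (simp add: sum_distrib_left)
  finally show ?thesis
    using assms by simp
qed

(* psi a = \<psi>(q^a) for a \<ge> 1 *)
definition psi :: "nat \<Rightarrow> rat fps" where
  "psi a = Abs_fps (\<lambda>n. of_nat (card {j. a * trinum j = n}))"

lemma card_centered_trinum:
  assumes "i < n"
  shows "card {m \<in> {..2*n}. trinum (int n - int m) = i} = card {j. trinum j = i}"
proof -
  let ?M = "{m \<in> {..2*n}. trinum (int n - int m) = i}"
  have image: "(\<lambda>m. int n - int m) ` ?M = {j. trinum j = i}"
  proof (intro equalityI subsetI)
    fix j assume j: "j \<in> {j. trinum j = i}"
    then have "\<bar>j\<bar> < int n"
      using abs_le_trinum[of j] assms by simp
    then have "nat (int n - j) \<in> ?M" "j = int n - int (nat (int n - j))"
      using j by auto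
    then show "j \<in> (\<lambda>m. int n - int m) ` ?M"
      by blast
  qed blast
  have "inj_on (\<lambda>m. int n - int m) ?M"
    by (rule inj_onI) simp
  then have "card ((\<lambda>m. int n - int m) ` ?M) = card ?M"
    by (rule card_image)
  then show ?thesis
    unfolding image by simp
qed

lemma sum_X_power_trinum_cutoff:
  assumes "k \<le> n"
  shows "fps_cutoff k (\<Sum>m\<le>2*n. fps_X ^ trinum (int n - int m)) = fps_cutoff k (psi 1)"
  unfolding fps_cutoff_eq_fps_cutoff_iff
proof (intro allI impI)
  fix i assume "i < k"
  have "(\<Sum>m\<le>2*n. fps_X ^ trinum (int n - int m) :: rat fps) $ i
      = (\<Sum>m\<in>{..2*n}. if trinum (int n - int m) = i then 1 else 0)"
    by (simp add: fps_sum_nth eq_commute[of i])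
  also have "\<dots> = of_nat (card {m \<in> {..2*n}. trinum (int n - int m) = i})"
    by (simp add: sum.inter_filter[symmetric])
  also have "\<dots> = psi 1 $ i"
    using card_centered_trinum[of i n] \<open>i < k\<close> assms by (simp add: psi_def)
  finally show "(\<Sum>m\<le>2*n. fps_X ^ trinum (int n - int m)) $ i = psi 1 $ i" .
qed

lemma qbinom_euler_f_cutoff:
  assumes "1 \<le> a" "k \<le> m" "k \<le> N - m" "m \<le> N"
  shows "fps_cutoff k (qbinom (fps_X ^ a) N m * euler_f a) = fps_cutoff k 1"
proof -
  let ?f = "euler_f a"
  have "fps_cutoff k (qbinom (fps_X ^ a) N m * ?f * ?f)
      = fps_cutoff k (qbinom (fps_X ^ a) N m * qpoch (fps_X ^ a) m * qpoch (fps_X ^ a) (N - m))"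
    using assms by (intro fps_cutoff_mult_cong euler_f_cutoff refl)
  also have "\<dots> = fps_cutoff k (qpoch (fps_X ^ a) N)"
    using assms(4) by (simp add: qbinom_qpoch)
  also have "\<dots> = fps_cutoff k ?f"
    using euler_f_cutoff[of a k N] assms by simp
  finally have "fps_cutoff k (qbinom (fps_X ^ a) N m * ?f * ?f * inverse ?f) = fps_cutoff k (?f * inverse ?f)"
    by (intro fps_cutoff_mult_cong refl)
  then show ?thesis
    by (simp add: euler_f_unit mult.assoc)
qed

lemma odd_prod_euler_f_cutoff:
  assumes "2*k \<le> n"
  shows "fps_cutoff k (odd_prod fps_X (2*n) * euler_f 4) = fps_cutoff k (psi 1)"
proof -
  have summand: "fps_cutoff k (fps_X ^ trinum (int n - int m) * qbinom (fps_X ^ 4) (2*n) m * euler_f 4)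
      = fps_cutoff k (fps_X ^ trinum (int n - int m))" if "m \<le> 2*n" for m
  proof (cases "k \<le> trinum (int n - int m)")
    case True
    then show ?thesis
      using fps_cutoff_X_power_mult[OF True, of "qbinom (fps_X ^ 4) (2*n) m * euler_f 4"]
        fps_cutoff_X_power_mult[OF True, of 1]
      by (simp add: mult.assoc)
  next
    case False
    then have "\<bar>int n - int m\<bar> < int k"
      using abs_le_trinum[of "int n - int m"] by simp
    then have "k \<le> m" "k \<le> 2*n - m"
      using assms that by auto
    then have "fps_cutoff k (qbinom (fps_X ^ 4) (2*n) m * euler_f 4) = fps_cutoff k 1"
      using that by (intro qbinom_euler_f_cutoff) simp_all
    from fps_cutoff_mult_cong[OF refl this, of "fps_X ^ trinum (int n - int m)"]
    show ?thesis
      by (simp add: mult.assoc)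
  qed
  have "fps_cutoff k (odd_prod fps_X (2*n) * euler_f 4)
      = (\<Sum>m\<le>2*n. fps_cutoff k (fps_X ^ trinum (int n - int m) * qbinom (fps_X ^ 4) (2*n) m * euler_f 4))"
    by (simp add: odd_prod_expansion sum_distrib_right fps_cutoff_sum)
  also have "\<dots> = fps_cutoff k (\<Sum>m\<le>2*n. fps_X ^ trinum (int n - int m))"
    by (simp add: summand fps_cutoff_sum)
  also have "\<dots> = fps_cutoff k (psi 1)"
    using assms by (intro sum_X_power_trinum_cutoff) simp
  finally show ?thesis .
qed

lemma psi_times_euler_f: "psi 1 * euler_f 1 = euler_f 2 ^ 2"
proof (rule fps_eq_by_cutoff)
  fix k :: nat
  define n where "n = 2*k"
  have "fps_cutoff k (psi 1 * euler_f 1) = fps_cutoff k (odd_prod fps_X (2*n) * euler_f 4 * euler_f 1)"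
    using odd_prod_euler_f_cutoff[of k n] by (intro fps_cutoff_mult_cong) (simp_all add: n_def)
  also have "\<dots> = fps_cutoff k (odd_prod fps_X (2*n) * qpoch (fps_X ^ 4) (2*n) * qpoch (fps_X ^ 1) (4*n))"
    by (intro fps_cutoff_mult_cong refl euler_f_cutoff) (simp_all add: n_def)
  also have "\<dots> = fps_cutoff k (qpoch (fps_X ^ 2) (4*n) * qpoch (fps_X ^ 2) (2*n))"
    using odd_prod_qpoch[of "fps_X :: rat fps" n] by simp
  also have "\<dots> = fps_cutoff k (euler_f 2 * euler_f 2)"
    by (intro fps_cutoff_mult_cong euler_f_cutoff[symmetric]) (simp_all add: n_def)
  finally show "fps_cutoff k (psi 1 * euler_f 1) = fps_cutoff k (euler_f 2 ^ 2)"
    by (simp add: power2_eq_square)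
qed

section \<open>Dilation and the \<open>U\<close>-operator\<close>

lemma fps_compose_X_power_nth:
  fixes f :: "'a::comm_ring_1 fps"
  assumes "0 < k"
  shows "(f oo fps_X ^ k) $ n = (if k dvd n then f $ (n div k) else 0)"
proof -
  have "(f oo fps_X ^ k) $ n = (\<Sum>i=0..n. if i = n div k \<and> k dvd n then f $ i else 0)"
    unfolding fps_compose_nth using assms
    by (intro sum.cong) (auto simp flip: power_mult)
  also have "\<dots> = (if k dvd n then f $ (n div k) else 0)"
    using assms by (auto simp: div_le_dividend)
  finally show ?thesis .
qed

lemma euler_f_compose_X_power:
  assumes "1 \<le> a" "0 < k"
  shows "euler_f a oo fps_X ^ k = euler_f (k * a)"
proof (rule fps_eq_by_cutoff)
  fix n
  have "fps_cutoff n (euler_f a oo fps_X ^ k) = fps_cutoff n (qpoch (fps_X ^ a) n oo fps_X ^ k)"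
    using assms by (intro fps_cutoff_compose_cong euler_f_cutoff) simp_all
  also have "qpoch (fps_X ^ a :: rat fps) n oo fps_X ^ k = qpoch (fps_X ^ (k * a)) n"
    using assms qpoch_compose[of "fps_X ^ k" "fps_X ^ a" n] by (simp add: fps_X_power_compose power_mult)
  also have "fps_cutoff n \<dots> = fps_cutoff n (euler_f (k * a))"
    using assms by (intro euler_f_cutoff[symmetric]) simp_all
  finally show "fps_cutoff n (euler_f a oo fps_X ^ k) = fps_cutoff n (euler_f (k * a))" .
qed

lemma psi_compose_X_power:
  assumes "0 < k"
  shows "psi a oo fps_X ^ k = psi (k * a)"
proof (rule fps_ext)
  fix n
  show "(psi a oo fps_X ^ k) $ n = psi (k * a) $ n"
  proof (cases "k dvd n")
    case True
    then have "{j. a * trinum j = n div k} = {j. k * a * trinum j = n}"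
      using assms by (auto simp: mult.assoc)
    then show ?thesis
      using True assms by (simp add: fps_compose_X_power_nth psi_def)
  next
    case False
    then have "{j. k * a * trinum j = n} = {}"
      by (auto simp: mult.assoc)
    then show ?thesis
      using False assms by (simp add: fps_compose_X_power_nth psi_def)
  qed
qed

lemma psi_eq_euler_f:
  assumes "1 \<le> k"
  shows "psi k = euler_f (2*k) ^ 2 * inverse (euler_f k)"
proof -
  have "(psi 1 * euler_f 1) oo fps_X ^ k = (euler_f 2 ^ 2) oo fps_X ^ k"
    by (simp only: psi_times_euler_f)
  then have "psi k * euler_f k = euler_f (2*k) ^ 2"
    using assms by (simp add: fps_compose_mult_distrib psi_compose_X_power euler_f_compose_X_power
        mult.commute flip: fps_compose_power)
  then show ?thesis
    by (metis euler_f_unit mult.assoc mult.right_neutral)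
qed

definition fps_U :: "nat \<Rightarrow> 'a fps \<Rightarrow> 'a fps" where
  "fps_U k f = Abs_fps (\<lambda>n. f $ (k * n))"

lemma sum_dvd_reindex:
  fixes k n :: nat
  assumes "0 < k"
  shows "(\<Sum>i=0..k*n. if k dvd i then h i else 0) = (\<Sum>j=0..n. h (k * j))"
proof -
  have "(\<Sum>i=0..k*n. if k dvd i then h i else 0) = sum h {i \<in> {0..k*n}. k dvd i}"
    by (subst sum.inter_filter) simp_all
  also have "{i \<in> {0..k*n}. k dvd i} = (\<lambda>j. k * j) ` {0..n}"
    using assms by (auto elim!: dvdE)
  also have "sum h \<dots> = (\<Sum>j=0..n. h (k * j))"
    using assms by (simp add: sum.reindex inj_on_def)
  finally show ?thesis .
qed

lemma fps_U_mult_compose_X_power: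
  fixes f g :: "'a::comm_ring_1 fps"
  assumes "0 < k"
  shows "fps_U k (f * (g oo fps_X ^ k)) = g * fps_U k f"
proof (rule fps_ext)
  fix n
  have "fps_U k (f * (g oo fps_X ^ k)) $ n
      = (\<Sum>i=0..k*n. if k dvd i then g $ (i div k) * f $ (k*n - i) else 0)"
    using assms by (auto simp: fps_U_def mult.commute[of f] fps_mult_nth fps_compose_X_power_nth
        intro!: sum.cong)
  also have "\<dots> = (\<Sum>j=0..n. g $ j * f $ (k * (n - j)))"
    using assms by (simp add: sum_dvd_reindex diff_mult_distrib2)
  also have "\<dots> = (g * fps_U k f) $ n"
    by (simp add: fps_U_def fps_mult_nth)
  finally show "fps_U k (f * (g oo fps_X ^ k)) $ n = (g * fps_U k f) $ n" .
qed

section \<open>The even part of \<open>\<psi>(q) \<psi>(q\<^sup>1\<^sup>5)\<close>\<close>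

lemma fps_mult_nth_card:
  fixes f :: "'b \<Rightarrow> nat" and g :: "'c \<Rightarrow> nat"
  assumes "\<And>n. finite {x. f x = n}" "\<And>n. finite {y. g y = n}"
  shows "(Abs_fps (\<lambda>n. of_nat (card {x. f x = n})) * Abs_fps (\<lambda>n. of_nat (card {y. g y = n}))
          :: 'a::comm_semiring_1 fps) $ n
       = of_nat (card {(x, y). f x + g y = n})"
proof -
  have "{(x, y). f x + g y = n} = (\<Union>i\<in>{0..n}. {x. f x = i} \<times> {y. g y = n - i})"
    by auto
  then have "card {(x, y). f x + g y = n} = (\<Sum>i=0..n. card ({x. f x = i} \<times> {y. g y = n - i}))"
    using assms by (simp add: card_UN_disjoint disjoint_iff)
  then show ?thesis
    by (simp add: fps_mult_nth card_cartesian_product)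
qed

lemma psi_mult_nth:
  assumes "1 \<le> a" "1 \<le> b"
  shows "(psi a * psi b) $ n = of_nat (card {(x, y). a * trinum x + b * trinum y = n})"
proof -
  have "finite {j. c * trinum j = m}" if "1 \<le> c" for c m
  proof (rule finite_subset[OF _ finite_trinum_le])
    show "{j. c * trinum j = m} \<subseteq> {j. trinum j \<le> m}"
      using that by (auto simp: dual_order.trans)
  qed
  then show ?thesis
    unfolding psi_def using assms by (intro fps_mult_nth_card)
qed

lemma even_trinum_iff: "even (trinum j) \<longleftrightarrow> even j"
proof -
  have "even (trinum j) \<longleftrightarrow> even (int (trinum j))"
    by (simp only: even_of_nat_iff)
  also have "\<dots> \<longleftrightarrow> even j"
    by (simp add: of_nat_trinum)
  finally show ?thesis .
qed

(* In the coordinates u = 4a + 1, v = 4b + 1, for which 8 j(2j+1) + 1 = (4j+1)^2, this is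
   (u, v) \<mapsto> \<plusminus>((5v - 3u)/2, (u + v)/2), the sign making both entries 1 modulo 4. *)
fun rep_map :: "int \<times> int \<Rightarrow> int \<times> int" where
  "rep_map (a, b) = (let c = (a + b) div 2 in
     if even (a + b) then (4*b - 3*c, c) else (3*c + 1 - 4*b, - c - 1))"

fun rep_map_inv :: "int \<times> int \<Rightarrow> int \<times> int" where
  "rep_map_inv (k, l) = (let d = (k + 3*l) div 4 in
     if 4 dvd k + 3*l then (2*l - d, d) else (d - 2*l, - d - 1))"

lemma rep_map_even: "a + b = 2*c \<Longrightarrow> rep_map (a, b) = (4*b - 3*c, c)"
  by simp

lemma rep_map_odd: "a + b = 2*c + 1 \<Longrightarrow> rep_map (a, b) = (3*c + 1 - 4*b, - c - 1)"
  by (simp add: Let_def)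

lemma rep_map_inv_dvd: "k + 3*l = 4*d \<Longrightarrow> rep_map_inv (k, l) = (2*l - d, d)"
  by simp

lemma rep_map_inv_not_dvd: "k + 3*l = 4*d + 2 \<Longrightarrow> rep_map_inv (k, l) = (d - 2*l, - d - 1)"
  by (simp add: Let_def) presburger

lemma rep_map_inv_rep_map: "rep_map_inv (rep_map p) = p"
proof -
  obtain a b where p: "p = (a, b)" by fastforce
  show ?thesis
  proof (cases "even (a + b)")
    case True
    then obtain c where "a + b = 2*c" by blast
    moreover have "4*b - 3*c + 3*c = 4*b" by simp
    ultimately show ?thesis
      unfolding p by (simp only: rep_map_even rep_map_inv_dvd) simp
  next
    case False
    then obtain c where "a + b = 2*c + 1" by (metis oddE)
    moreover have "3*c + 1 - 4*b + 3*(- c - 1) = 4*(- b - 1) + 2" by simp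
    ultimately show ?thesis
      unfolding p by (simp only: rep_map_odd rep_map_inv_not_dvd) simp
  qed
qed

lemma rep_map_rep_map_inv:
  assumes "even (k + l)"
  shows "rep_map (rep_map_inv (k, l)) = (k, l)"
proof (cases "4 dvd k + 3*l")
  case True
  then obtain d where "k + 3*l = 4*d" by blast
  moreover have "2*l - d + d = 2*l" by simp
  ultimately show ?thesis
    by (simp only: rep_map_even rep_map_inv_dvd) simp
next
  case False
  with assms have "k + 3*l = 4 * ((k + 3*l) div 4) + 2"
    by presburger
  then obtain d where "k + 3*l = 4*d + 2" by blast
  moreover have "d - 2*l + (- d - 1) = 2*(- l - 1) + 1" by simp
  ultimately show ?thesis
    by (simp only: rep_map_odd rep_map_inv_not_dvd) simp
qed

lemma rep_map_trinum:
  assumes "rep_map (a, b) = (k, l)"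
  shows "trinum k + 15 * trinum l = 2 * (3 * trinum a + 5 * trinum b)"
proof -
  have "int (trinum k + 15 * trinum l) = int (2 * (3 * trinum a + 5 * trinum b))"
  proof (cases "even (a + b)")
    case True
    then obtain c where c: "a + b = 2*c" by blast
    then have "k = 4*b - 3*c" "l = c" "a = 2*c - b"
      using assms rep_map_even[OF c] by simp_all
    then show ?thesis
      unfolding of_nat_add of_nat_mult of_nat_numeral of_nat_trinum by algebra
  next
    case False
    then obtain c where c: "a + b = 2*c + 1" by (metis oddE)
    then have "k = 3*c + 1 - 4*b" "l = - c - 1" "a = 2*c + 1 - b"
      using assms rep_map_odd[OF c] by simp_all
    then show ?thesis
      unfolding of_nat_add of_nat_mult of_nat_numeral of_nat_trinum by algebra
  qed
  then show ?thesis
    by (simp only: of_nat_eq_iff)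
qed

lemma card_rep_3_5_eq_card_rep_1_15:
  "card {(a, b). 3 * trinum a + 5 * trinum b = n} = card {(k, l). trinum k + 15 * trinum l = 2*n}"
proof (rule bij_betw_same_card)
  have inverse: "rep_map (rep_map_inv (k, l)) = (k, l)" if "trinum k + 15 * trinum l = 2*n" for k l
  proof (rule rep_map_rep_map_inv)
    have "even (trinum k + 15 * trinum l)"
      using that by simp
    then show "even (k + l)"
      by (simp add: even_trinum_iff)
  qed
  show "bij_betw rep_map {(a, b). 3 * trinum a + 5 * trinum b = n} {(k, l). trinum k + 15 * trinum l = 2*n}"
  proof (rule bij_betw_byWitness[where f' = rep_map_inv])
    show "rep_map ` {(a, b). 3 * trinum a + 5 * trinum b = n} \<subseteq> {(k, l). trinum k + 15 * trinum l = 2*n}"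
      using rep_map_trinum by (auto split: prod.splits)
    show "rep_map_inv ` {(k, l). trinum k + 15 * trinum l = 2*n} \<subseteq> {(a, b). 3 * trinum a + 5 * trinum b = n}"
    proof safe
      fix k l a b assume kl: "trinum k + 15 * trinum l = 2*n" and "(a, b) = rep_map_inv (k, l)"
      then have "rep_map (a, b) = (k, l)"
        using inverse by simp
      then show "3 * trinum a + 5 * trinum b = n"
        using rep_map_trinum kl by fastforce
    qed
  qed (use inverse rep_map_inv_rep_map in auto)
qed

lemma fps_U_2_psi_1_psi_15: "fps_U 2 (psi 1 * psi 15) = psi 3 * psi 5"
proof (rule fps_ext)
  fix n
  have "fps_U 2 (psi 1 * psi 15) $ n = of_nat (card {(k, l). trinum k + 15 * trinum l = 2*n})"
    using psi_mult_nth[of 1 15 "2*n"] by (simp add: fps_U_def)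
  also have "\<dots> = (psi 3 * psi 5) $ n"
    by (simp add: psi_mult_nth card_rep_3_5_eq_card_rep_1_15)
  finally show "fps_U 2 (psi 1 * psi 15) $ n = (psi 3 * psi 5) $ n" .
qed

lemma fps_U_2_P_gf: "fps_U 2 P_gf = P_gf ^ 2"
proof -
  let ?f = euler_f
  let ?i = "\<lambda>k. inverse (euler_f k)"
  have unit: "?f k * ?i k = 1" for k
    by (rule euler_f_unit)
  have P_gf: "P_gf = ?f 6 * ?f 10 * (?i 1 * ?i 15)"
    by (simp add: P_gf_def fps_inverse_mult)
  define Q where "Q = ?f 3 * ?f 5 * (?i 1 ^ 2 * ?i 15 ^ 2)"
  have Q_compose: "Q oo fps_X ^ 2 = ?f 6 * ?f 10 * (?i 2 ^ 2 * ?i 30 ^ 2)"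
    by (simp add: Q_def fps_compose_mult_distrib fps_inverse_compose euler_f_compose_X_power
        euler_f_nth_0 flip: fps_compose_power)
  have "psi 1 * psi 15 * (Q oo fps_X ^ 2)
      = (?f 2 * ?i 2) ^ 2 * (?f 30 * ?i 30) ^ 2 * (?f 6 * ?f 10 * (?i 1 * ?i 15))"
    by (simp add: psi_eq_euler_f Q_compose power_mult_distrib mult_ac)
  then have factorization: "P_gf = psi 1 * psi 15 * (Q oo fps_X ^ 2)"
    by (simp add: unit P_gf)
  have "fps_U 2 P_gf = psi 3 * psi 5 * Q"
    unfolding factorization fps_U_mult_compose_X_power[of 2, simplified] fps_U_2_psi_1_psi_15
    by (simp add: mult.commute)
  also have "\<dots> = (?f 3 * ?i 3) * (?f 5 * ?i 5) * (?f 6 * ?f 10 * (?i 1 * ?i 15)) ^ 2"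
    by (simp add: psi_eq_euler_f Q_def power_mult_distrib mult_ac)
  also have "\<dots> = P_gf ^ 2"
    by (simp add: unit P_gf)
  finally show ?thesis .
qed

theorem theorem3p5:
  shows "convolutive 2 P"
proof -
  have "Abs_fps P = P_gf"
    by (simp add: P_def fps_eq_iff)
  moreover have "Abs_fps (\<lambda>n. P (2 * n)) = fps_U 2 P_gf"
    by (simp add: P_def fps_U_def)
  ultimately show ?thesis
    by (simp add: convolutive_def fps_U_2_P_gf)
qed

end
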